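(* Consider any AS graph (with its customer–provider and peer–peer labels), any destination AS $d$, any set $S\subseteq V$ of secure ASes (partial deployment allowed), and any fixed deterministic tie-break rules, and suppose all secure ASes use the same one of the three S*BGP routing models (security first, security second, or security third). Then the routing system has a unique stable routing state, and S*BGP route-selection dynamics are guaranteed to converge to this stable routing state. This holds in each of the three S*BGP routing models.
   Context: An AS graph is an undirected graph $G=(V,E)$ whose vertices are autonomous systems (ASes); every edge is labeled either customer–provider (one endpoint is the customer, the other its provider) or peer–peer. Routing to a fixed destination $d\in V$ is considered. The destination $d$ announces the route "$d$" to its neighbors. Every other AS $s$ selects at most one route to $d$ (a simple AS-level path from $s$ to $d$) among the routes announced to it by its neighbors, and announces the selected route (prepended with itself) according to the export policy (Ex): if the route's next hop is a customer of $s$, it is announced to all neighbors; otherwise only to $s$'s customers. A route at $s$ is a customer/peer/provider route if its next hop is a customer/peer/provider of $s$; its length is its number of hops. An insecure AS ranks available routes by: (LP) customer routes over peer routes over provider routes; then (SP) shorter over longer; then (TB) a fixed AS-specific deterministic tie-break. A set $S\subseteq V$ of ASes is secure; a route is secure iff every AS on it is in $S$ (such routes are learned via S*BGP), otherwise insecure. Each secure AS additionally applies the rule (SecP): prefer a secure route over an insecure route. In the security-first model SecP is applied before LP; in the security-second model between LP and SP; in the security-third model between SP and TB. Routing dynamics: ASes repeatedly (asynchronously) re-run their route selection on the routes currently announced to them and re-announce per Ex. A routing state (the route chosen by each AS $s\ne d$) is stable if no AS that re-runs its route selection changes its route. *)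

theory Defs
  imports Main
begin

text \<open>AS graph: vertex set V; cp x y means "x is a customer of y" (y is a provider of x);
  pr x y means "x and y are peers".
  Following the paper's standing (Gao-Rexford) assumption, there is no customer-provider cycle.\<close>

definition adj :: "('v \<Rightarrow> 'v \<Rightarrow> bool) \<Rightarrow> ('v \<Rightarrow> 'v \<Rightarrow> bool) \<Rightarrow> 'v \<Rightarrow> 'v \<Rightarrow> bool" where
  "adj cp pr x y \<longleftrightarrow> cp x y \<or> cp y x \<or> pr x y"

definition as_graph :: "'v set \<Rightarrow> ('v \<Rightarrow> 'v \<Rightarrow> bool) \<Rightarrow> ('v \<Rightarrow> 'v \<Rightarrow> bool) \<Rightarrow> bool" where
  "as_graph V cp pr \<longleftrightarrow>
     finite V
   \<and> (\<forall>x y. cp x y \<longrightarrow> x \<in> V \<and> y \<in> V \<and> x \<noteq> y)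
   \<and> (\<forall>x y. pr x y \<longrightarrow> x \<in> V \<and> y \<in> V \<and> x \<noteq> y \<and> pr y x \<and> \<not> cp x y \<and> \<not> cp y x)
   \<and> (\<forall>x. (x, x) \<notin> {(a, b). cp a b}\<^sup>+)"

definition is_route :: "('v \<Rightarrow> 'v \<Rightarrow> bool) \<Rightarrow> ('v \<Rightarrow> 'v \<Rightarrow> bool) \<Rightarrow> 'v \<Rightarrow> 'v \<Rightarrow> 'v list \<Rightarrow> bool" where
  "is_route cp pr d s p \<longleftrightarrow> p \<noteq> [] \<and> hd p = s \<and> last p = d \<and> distinct p
     \<and> (\<forall>i. Suc i < length p \<longrightarrow> adj cp pr (p ! i) (p ! Suc i))"

datatype sec_model = SecFirst | SecSecond | SecThird

definition lp_class :: "('v \<Rightarrow> 'v \<Rightarrow> bool) \<Rightarrow> ('v \<Rightarrow> 'v \<Rightarrow> bool) \<Rightarrow> 'v \<Rightarrow> 'v list \<Rightarrow> nat" where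
  "lp_class cp pr s p = (if cp (p ! 1) s then 0 else if pr s (p ! 1) then 1 else 2)"

definition secure_route :: "'v set \<Rightarrow> 'v list \<Rightarrow> bool" where
  "secure_route S p \<longleftrightarrow> set p \<subseteq> S"

definition rank_key :: "('v \<Rightarrow> 'v \<Rightarrow> bool) \<Rightarrow> ('v \<Rightarrow> 'v \<Rightarrow> bool) \<Rightarrow> 'v set \<Rightarrow> sec_model
    \<Rightarrow> 'v \<Rightarrow> 'v list \<Rightarrow> nat list" where
  "rank_key cp pr S m s p =
    (let c = lp_class cp pr s p; l = length p - 1; sc = (if secure_route S p then 0 else 1::nat) in
     if s \<notin> S then [c, l]
     else (case m of SecFirst \<Rightarrow> [sc, c, l] | SecSecond \<Rightarrow> [c, sc, l] | SecThird \<Rightarrow> [c, l, sc]))"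

definition lex_less :: "nat list \<Rightarrow> nat list \<Rightarrow> bool" where
  "lex_less xs ys \<longleftrightarrow> (xs, ys) \<in> lexord {(a, b). a < b}"

definition better :: "('v \<Rightarrow> 'v \<Rightarrow> bool) \<Rightarrow> ('v \<Rightarrow> 'v \<Rightarrow> bool) \<Rightarrow> 'v set \<Rightarrow> sec_model
    \<Rightarrow> ('v \<Rightarrow> 'v list \<Rightarrow> 'v list \<Rightarrow> bool) \<Rightarrow> 'v \<Rightarrow> 'v list \<Rightarrow> 'v list \<Rightarrow> bool" where
  "better cp pr S m tb s p q \<longleftrightarrow>
     lex_less (rank_key cp pr S m s p) (rank_key cp pr S m s q)
   \<or> (rank_key cp pr S m s p = rank_key cp pr S m s q \<and> tb s p q)"

definition strict_total :: "('a \<Rightarrow> 'a \<Rightarrow> bool) \<Rightarrow> bool" where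
  "strict_total R \<longleftrightarrow> (\<forall>x. \<not> R x x) \<and> (\<forall>x y z. R x y \<longrightarrow> R y z \<longrightarrow> R x z)
     \<and> (\<forall>x y. x \<noteq> y \<longrightarrow> R x y \<or> R y x)"

definition cur_route :: "'v \<Rightarrow> ('v \<Rightarrow> 'v list option) \<Rightarrow> 'v \<Rightarrow> 'v list option" where
  "cur_route d r n = (if n = d then Some [d] else r n)"

definition exports :: "('v \<Rightarrow> 'v \<Rightarrow> bool) \<Rightarrow> 'v \<Rightarrow> 'v \<Rightarrow> 'v list \<Rightarrow> 'v \<Rightarrow> bool" where
  "exports cp d n p s \<longleftrightarrow> n = d \<or> cp (p ! 1) n \<or> cp s n"

definition available :: "('v \<Rightarrow> 'v \<Rightarrow> bool) \<Rightarrow> ('v \<Rightarrow> 'v \<Rightarrow> bool) \<Rightarrow> 'v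
    \<Rightarrow> ('v \<Rightarrow> 'v list option) \<Rightarrow> 'v \<Rightarrow> 'v list set" where
  "available cp pr d r s =
     {s # p | n p. adj cp pr s n \<and> cur_route d r n = Some p \<and> exports cp d n p s \<and> s \<notin> set p}"

definition select :: "('v \<Rightarrow> 'v \<Rightarrow> bool) \<Rightarrow> ('v \<Rightarrow> 'v \<Rightarrow> bool) \<Rightarrow> 'v \<Rightarrow> 'v set \<Rightarrow> sec_model
    \<Rightarrow> ('v \<Rightarrow> 'v list \<Rightarrow> 'v list \<Rightarrow> bool) \<Rightarrow> ('v \<Rightarrow> 'v list option) \<Rightarrow> 'v \<Rightarrow> 'v list option" where
  "select cp pr d S m tb r s =
     (let A = available cp pr d r s in
      if A = {} then None
      else Some (THE p. p \<in> A \<and> (\<forall>q\<in>A. q \<noteq> p \<longrightarrow> better cp pr S m tb s p q)))"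

definition stable_state :: "'v set \<Rightarrow> ('v \<Rightarrow> 'v \<Rightarrow> bool) \<Rightarrow> ('v \<Rightarrow> 'v \<Rightarrow> bool) \<Rightarrow> 'v \<Rightarrow> 'v set \<Rightarrow> sec_model
    \<Rightarrow> ('v \<Rightarrow> 'v list \<Rightarrow> 'v list \<Rightarrow> bool) \<Rightarrow> ('v \<Rightarrow> 'v list option) \<Rightarrow> bool" where
  "stable_state V cp pr d S m tb r \<longleftrightarrow>
     (\<forall>s. r s = (if s \<in> V \<and> s \<noteq> d then select cp pr d S m tb r s else None))"

definition routing_state :: "'v set \<Rightarrow> ('v \<Rightarrow> 'v \<Rightarrow> bool) \<Rightarrow> ('v \<Rightarrow> 'v \<Rightarrow> bool) \<Rightarrow> 'v
    \<Rightarrow> ('v \<Rightarrow> 'v list option) \<Rightarrow> bool" where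
  "routing_state V cp pr d r \<longleftrightarrow>
     (\<forall>s. (s \<notin> V \<or> s = d \<longrightarrow> r s = None) \<and> (\<forall>p. r s = Some p \<longrightarrow> is_route cp pr d s p))"

primrec run :: "'v set \<Rightarrow> ('v \<Rightarrow> 'v \<Rightarrow> bool) \<Rightarrow> ('v \<Rightarrow> 'v \<Rightarrow> bool) \<Rightarrow> 'v \<Rightarrow> 'v set \<Rightarrow> sec_model
    \<Rightarrow> ('v \<Rightarrow> 'v list \<Rightarrow> 'v list \<Rightarrow> bool) \<Rightarrow> ('v \<Rightarrow> 'v list option) \<Rightarrow> (nat \<Rightarrow> 'v set)
    \<Rightarrow> nat \<Rightarrow> 'v \<Rightarrow> 'v list option" where
  "run V cp pr d S m tb r0 \<sigma> 0 = r0"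
| "run V cp pr d S m tb r0 \<sigma> (Suc t) =
     (\<lambda>s. if s \<in> \<sigma> t \<and> s \<in> V \<and> s \<noteq> d
          then select cp pr d S m tb (run V cp pr d S m tb r0 \<sigma> t) s
          else run V cp pr d S m tb r0 \<sigma> t s)"

definition fair :: "'v set \<Rightarrow> 'v \<Rightarrow> (nat \<Rightarrow> 'v set) \<Rightarrow> bool" where
  "fair V d \<sigma> \<longleftrightarrow> (\<forall>s\<in>V - {d}. \<forall>t. \<exists>t'\<ge>t. s \<in> \<sigma> t')"

end

theory Submission
  imports Defs
begin

text \<open>
  The routing dynamics settle AS by AS along the acyclic customer-provider hierarchy.
  An AS exports to its providers and peers only customer routes, and these settle from the
  bottom of the hierarchy upwards: the customer routes available to an AS come from its
  customers, and once those are eventually constant the AS eventually keeps a fixed best one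
  (or has none), provided customer routes outrank all others.  Then everything an AS is
  offered by customers and peers is eventually constant, so its routes settle from the top
  of the hierarchy downwards.  Relativising both sweeps to routes inside a set U of ASes
  handles the security-first model: for U the secure ASes, every secure AS eventually keeps
  a fixed secure route or has no secure route left, and in the latter case ranks routes like
  an insecure AS, so the sweeps for U the set of all ASes apply in all three models.
  The limit is reached from every initial state under every fair schedule, hence it is the
  unique stable state.
\<close>

lemma strict_totalD:
  assumes "strict_total R"
  shows strict_total_irrefl: "\<not> R x x"
    and strict_total_trans: "R x y \<Longrightarrow> R y z \<Longrightarrow> R x z"
    and strict_total_total: "x \<noteq> y \<Longrightarrow> R x y \<or> R y x"
  using assms unfolding strict_total_def by blast+

definition best :: "('a \<Rightarrow> 'a \<Rightarrow> bool) \<Rightarrow> 'a set \<Rightarrow> 'a" where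
  "best R A = (THE p. p \<in> A \<and> (\<forall>q\<in>A. q \<noteq> p \<longrightarrow> R p q))"

lemma best_eqI:
  assumes R: "strict_total R" and p: "p \<in> A" "\<forall>q\<in>A. q \<noteq> p \<longrightarrow> R p q"
  shows "best R A = p"
  unfolding best_def
proof (rule the_equality)
  fix p' assume p': "p' \<in> A \<and> (\<forall>q\<in>A. q \<noteq> p' \<longrightarrow> R p' q)"
  show "p' = p"
  proof (rule ccontr)
    assume "p' \<noteq> p"
    with p p' have "R p p'" "R p' p" by auto
    then show False using strict_total_irrefl[OF R] strict_total_trans[OF R] by blast
  qed
qed (use p in blast)

lemma strict_total_has_best:
  assumes R: "strict_total R" and "finite A" "A \<noteq> {}"
  shows "\<exists>p\<in>A. \<forall>q\<in>A. q \<noteq> p \<longrightarrow> R p q"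
  using assms(2,3)
proof (induction A rule: finite_ne_induct)
  case (insert x A)
  then obtain p where p: "p \<in> A" "\<forall>q\<in>A. q \<noteq> p \<longrightarrow> R p q" by blast
  with insert.hyps have "x \<noteq> p" by blast
  with R consider "R x p" | "R p x" by (blast dest: strict_total_total)
  then show ?case
  proof cases
    case 1
    have "R x q" if "q \<in> A" for q
      using 1 p strict_total_trans[OF R] that by (cases "q = p") auto
    then have "\<forall>q\<in>insert x A. q \<noteq> x \<longrightarrow> R x q" by blast
    then show ?thesis by blast
  next
    case 2
    with p show ?thesis by blast
  qed
qed simp

lemma best_in:
  assumes "strict_total R" "finite A" "A \<noteq> {}"
  shows "best R A \<in> A"
  using strict_total_has_best[OF assms] best_eqI[OF assms(1)] by metis

lemma best_subset:
  assumes R: "strict_total R" and "finite A" "B \<subseteq> A" "B \<noteq> {}"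
    and "\<forall>p\<in>B. \<forall>q\<in>A - B. R p q"
  shows "best R A = best R B"
proof -
  obtain b where b: "b \<in> B" "\<forall>q\<in>B. q \<noteq> b \<longrightarrow> R b q"
    using strict_total_has_best[OF R finite_subset[OF assms(3,2)] assms(4)] by blast
  with assms(3,5) have "best R A = b"
    by (intro best_eqI[OF R]) auto
  moreover from b have "best R B = b"
    by (rule best_eqI[OF R])
  ultimately show ?thesis by simp
qed

lemma lex_less_Cons: "lex_less (a # xs) (b # ys) \<longleftrightarrow> a < b \<or> a = b \<and> lex_less xs ys"
  unfolding lex_less_def by simp

lemma strict_total_lex_less: "strict_total lex_less"
  unfolding strict_total_def lex_less_def
proof (intro conjI allI impI)
  let ?less = "{(a, b). a < (b::nat)}"
  show "(xs, xs) \<notin> lexord ?less" for xs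
    by (rule lexord_irreflexive) simp
  show "(xs, zs) \<in> lexord ?less" if "(xs, ys) \<in> lexord ?less" "(ys, zs) \<in> lexord ?less" for xs ys zs
    using that by (rule lexord_trans) (simp add: trans_def)
  have "\<forall>a b. (a, b) \<in> ?less \<or> a = b \<or> (b, a) \<in> ?less" by auto
  from lexord_linear[OF this]
  show "(xs, ys) \<in> lexord ?less \<or> (ys, xs) \<in> lexord ?less" if "xs \<noteq> ys" for xs ys
    using that by blast
qed

lemma strict_total_better:
  assumes tb: "strict_total (tb s)"
  shows "strict_total (better cp pr S m tb s)"
proof -
  let ?k = "rank_key cp pr S m s"
  note lex = strict_totalD[OF strict_total_lex_less] and tie = strict_totalD[OF tb]
  show ?thesis
    unfolding strict_total_def better_def
  proof (intro conjI allI impI)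
    show "\<not> (lex_less (?k p) (?k p) \<or> ?k p = ?k p \<and> tb s p p)" for p
      using lex(1) tie(1) by blast
    show "lex_less (?k p) (?k r) \<or> ?k p = ?k r \<and> tb s p r"
      if "lex_less (?k p) (?k q) \<or> ?k p = ?k q \<and> tb s p q"
        and "lex_less (?k q) (?k r) \<or> ?k q = ?k r \<and> tb s q r" for p q r
      using that lex(2) tie(2) by (elim disjE conjE) simp_all
    show "(lex_less (?k p) (?k q) \<or> ?k p = ?k q \<and> tb s p q)
        \<or> (lex_less (?k q) (?k p) \<or> ?k q = ?k p \<and> tb s q p)" if "p \<noteq> q" for p q
      using that lex(3)[of "?k p" "?k q"] tie(3)[of p q] by (cases "?k p = ?k q") auto
  qed
qed

locale sbgp =
  fixes V :: "'v set" and cp pr :: "'v \<Rightarrow> 'v \<Rightarrow> bool" and d :: 'v and S :: "'v set"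
    and m :: sec_model and tb :: "'v \<Rightarrow> 'v list \<Rightarrow> 'v list \<Rightarrow> bool"
  assumes as_graph: "as_graph V cp pr" and strict_total_tb: "strict_total (tb s)"
begin

abbreviation "prefer u \<equiv> better cp pr S m tb u"
abbreviation "avail r u \<equiv> available cp pr d r u"
abbreviation "sel r u \<equiv> select cp pr d S m tb r u"
abbreviation "trace r0 \<sigma> t \<equiv> run V cp pr d S m tb r0 \<sigma> t"

lemma finite_V: "finite V"
  using as_graph unfolding as_graph_def by blast

lemma adj_in_V: "adj cp pr x y \<Longrightarrow> y \<in> V"
  using as_graph unfolding as_graph_def adj_def by blast

lemma cp_in_V: "cp x y \<Longrightarrow> x \<in> V"
  using as_graph unfolding as_graph_def by blast

lemma wf_cp: "wf {(x, y). cp x y}"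
  and wf_cp_converse: "wf ({(x, y). cp x y}\<inverse>)"
proof -
  have "{(x, y). cp x y} \<subseteq> V \<times> V"
    using as_graph unfolding as_graph_def by blast
  then have "finite {(x, y). cp x y}"
    using finite_V by (simp add: finite_subset)
  moreover have "acyclic {(x, y). cp x y}"
    using as_graph unfolding as_graph_def acyclic_def by blast
  ultimately show "wf {(x, y). cp x y}" "wf ({(x, y). cp x y}\<inverse>)"
    by (rule finite_acyclic_wf, rule finite_acyclic_wf_converse)
qed

lemma cp_asym: "cp x y \<Longrightarrow> \<not> cp y x"
  using wf_not_sym[OF wf_cp] by blast

lemma finite_neighbours: "finite {n. adj cp pr u n \<and> N n}"
  by (rule rev_finite_subset[OF finite_V]) (auto dest: adj_in_V)

lemma finite_available: "finite (avail r u)"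
proof -
  have "avail r u \<subseteq> (\<lambda>n. u # the (cur_route d r n)) ` V"
    unfolding available_def using adj_in_V by force
  then show ?thesis
    using finite_V finite_subset by blast
qed

lemma strict_total_prefer: "strict_total (prefer u)"
  by (rule strict_total_better[OF strict_total_tb])

lemma select_eq: "sel r u = (if avail r u = {} then None else Some (best (prefer u) (avail r u)))"
  unfolding select_def best_def Let_def by simp

lemma select_in_available:
  assumes "sel r u = Some q"
  shows "q \<in> avail r u"
proof -
  from assms have "avail r u \<noteq> {}" "q = best (prefer u) (avail r u)"
    by (simp_all add: select_eq split: if_splits)
  then show ?thesis
    using best_in[OF strict_total_prefer finite_available] by simp
qed

definition prefers :: "('v list \<Rightarrow> bool) \<Rightarrow> ('v \<Rightarrow> 'v list option) \<Rightarrow> 'v \<Rightarrow> bool" where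
  "prefers P r u \<longleftrightarrow> (\<forall>p\<in>avail r u. \<forall>q\<in>avail r u. P p \<and> \<not> P q \<longrightarrow> prefer u p q)"

lemma select_preferred:
  assumes "prefers P r u" and B: "{q \<in> avail r u. P q} = B" "B \<noteq> {}"
  shows "sel r u = Some (best (prefer u) B) \<and> P (best (prefer u) B)"
proof -
  note R = strict_total_prefer
  have sub: "B \<subseteq> avail r u" using B by blast
  have "\<forall>p\<in>B. \<forall>q\<in>avail r u - B. prefer u p q"
    using assms unfolding prefers_def by auto
  then have "best (prefer u) (avail r u) = best (prefer u) B"
    by (rule best_subset[OF R finite_available sub B(2)])
  moreover have "best (prefer u) B \<in> B"
    using best_in[OF R finite_subset[OF sub finite_available] B(2)] .
  ultimately show ?thesis
    using select_eq sub B by auto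
qed

text \<open>An invariant of all runs; it identifies the next hop of an available route with the
  neighbour that announced it.\<close>
definition wellformed :: "('v \<Rightarrow> 'v list option) \<Rightarrow> bool" where
  "wellformed r \<longleftrightarrow> (\<forall>u p. r u = Some p \<longrightarrow> u \<in> V \<and> u \<noteq> d \<and> (\<exists>q. p = u # q))"

lemma cur_route_Cons: "wellformed r \<Longrightarrow> cur_route d r n = Some p \<Longrightarrow> \<exists>q. p = n # q"
  unfolding wellformed_def cur_route_def by (cases "n = d") auto

lemma availableE:
  assumes "wellformed r" "q \<in> avail r u"
  obtains n p where "q = u # p" "adj cp pr u n" "cur_route d r n = Some p"
    "exports cp d n p u" "u \<notin> set p" "q ! 1 = n"
proof -
  obtain n p where q: "q = u # p" "adj cp pr u n" "cur_route d r n = Some p"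
    "exports cp d n p u" "u \<notin> set p"
    using assms(2) unfolding available_def by blast
  moreover obtain z where "p = n # z"
    using cur_route_Cons[OF assms(1) q(3)] by blast
  ultimately show ?thesis
    using that by simp
qed

definition admissible :: "('v \<Rightarrow> 'v list option) \<Rightarrow> (nat \<Rightarrow> 'v set) \<Rightarrow> bool" where
  "admissible r0 \<sigma> \<longleftrightarrow> routing_state V cp pr d r0 \<and> fair V d \<sigma>"

lemma admissible_synchronous: "admissible (\<lambda>_. None) (\<lambda>_. UNIV)"
  unfolding admissible_def routing_state_def fair_def by auto

lemma wellformed_trace:
  assumes "admissible r0 \<sigma>"
  shows "wellformed (trace r0 \<sigma> t)"
proof (induction t)
  case 0
  have "u \<in> V \<and> u \<noteq> d \<and> (\<exists>q. p = u # q)" if "r0 u = Some p" for u p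
  proof -
    from that assms have "u \<in> V" "u \<noteq> d" "is_route cp pr d u p"
      unfolding admissible_def routing_state_def by auto
    then show ?thesis
      unfolding is_route_def by (cases p) auto
  qed
  then show ?case
    unfolding wellformed_def by simp
next
  case (Suc t)
  have "u \<in> V \<and> u \<noteq> d \<and> (\<exists>q. p = u # q)" if p: "trace r0 \<sigma> (Suc t) u = Some p" for u p
  proof (cases "u \<in> \<sigma> t \<and> u \<in> V \<and> u \<noteq> d")
    case True
    with p have "p \<in> avail (trace r0 \<sigma> t) u"
      by (intro select_in_available) simp
    with Suc True show ?thesis
      by (auto elim: availableE)
  next
    case False
    with p Suc show ?thesis
      unfolding wellformed_def by simp
  qed
  then show ?case
    unfolding wellformed_def by blast
qed

definition inevitably :: "(('v \<Rightarrow> 'v list option) \<Rightarrow> bool) \<Rightarrow> bool" where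
  "inevitably P \<longleftrightarrow> (\<forall>r0 \<sigma>. admissible r0 \<sigma> \<longrightarrow> (\<forall>\<^sub>F t in sequentially. P (trace r0 \<sigma> t)))"

lemma inevitably_mono:
  assumes "inevitably P" "\<And>r. wellformed r \<Longrightarrow> P r \<Longrightarrow> Q r"
  shows "inevitably Q"
  unfolding inevitably_def
proof (intro allI impI)
  fix r0 \<sigma> assume adm: "admissible r0 \<sigma>"
  with assms(1) have "\<forall>\<^sub>F t in sequentially. P (trace r0 \<sigma> t)"
    unfolding inevitably_def by blast
  then show "\<forall>\<^sub>F t in sequentially. Q (trace r0 \<sigma> t)"
    by (rule eventually_mono) (use assms(2) wellformed_trace[OF adm] in blast)
qed

lemma inevitablyI: "(\<And>r. wellformed r \<Longrightarrow> P r) \<Longrightarrow> inevitably P"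
  by (rule inevitably_mono[of "\<lambda>_. True"]) (simp_all add: inevitably_def)

lemma inevitably_conj: "inevitably P \<Longrightarrow> inevitably Q \<Longrightarrow> inevitably (\<lambda>r. P r \<and> Q r)"
  unfolding inevitably_def using eventually_conj by blast

lemma inevitably_ball:
  assumes "finite A" "\<forall>x\<in>A. inevitably (P x)"
  shows "inevitably (\<lambda>r. \<forall>x\<in>A. P x r)"
  using assms eventually_ball_finite[OF assms(1), of "\<lambda>t x. P x (trace _ _ t)"]
  unfolding inevitably_def by blast

lemma inevitably_constant_on:
  assumes "finite N" "\<forall>n\<in>N. \<exists>e. inevitably (\<lambda>r. F r n = e)"
  shows "\<exists>e. inevitably (\<lambda>r. \<forall>n\<in>N. F r n = e n)"
proof -
  from assms(2) obtain e where "\<forall>n\<in>N. inevitably (\<lambda>r. F r n = e n)"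
    by metis
  then show ?thesis
    using inevitably_ball[OF assms(1), of "\<lambda>n r. F r n = e n"] by blast
qed

lemma inevitably_witness:
  assumes "inevitably P"
  shows "\<exists>r. wellformed r \<and> P r"
proof -
  from assms have "\<forall>\<^sub>F t in sequentially. P (trace (\<lambda>_. None) (\<lambda>_. UNIV) t)"
    using admissible_synchronous unfolding inevitably_def by blast
  then obtain t where "P (trace (\<lambda>_. None) (\<lambda>_. UNIV) t)"
    unfolding eventually_sequentially by blast
  then show ?thesis
    using wellformed_trace[OF admissible_synchronous] by blast
qed

text \<open>Fairness lets u re-run its selection after the selected route has stabilised; from then on
  u's route is the selected one.\<close>
lemma inevitably_select:
  assumes u: "u \<in> V" "u \<noteq> d" and sel: "inevitably (\<lambda>r. Q (sel r u))"
  shows "inevitably (\<lambda>r. Q (r u))"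
  unfolding inevitably_def
proof (intro allI impI)
  fix r0 \<sigma> assume adm: "admissible r0 \<sigma>"
  then obtain T where T: "\<And>t. t \<ge> T \<Longrightarrow> Q (sel (trace r0 \<sigma> t) u)"
    using sel unfolding inevitably_def eventually_sequentially by blast
  obtain t0 where t0: "t0 \<ge> T" "u \<in> \<sigma> t0"
    using adm u unfolding admissible_def fair_def by blast
  have "Q (trace r0 \<sigma> (Suc t0 + k) u)" for k
  proof (induction k)
    case 0
    then show ?case using t0 T u by simp
  next
    case (Suc k)
    have "Q (sel (trace r0 \<sigma> (Suc t0 + k)) u)"
      by (rule T) (use t0(1) in simp)
    with Suc u show ?case by simp
  qed
  then show "\<forall>\<^sub>F t in sequentially. Q (trace r0 \<sigma> t u)"
    unfolding eventually_sequentially by (metis le_add_diff_inverse)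
qed

definition converges :: "'v \<Rightarrow> 'v list option \<Rightarrow> bool" where
  "converges u v \<longleftrightarrow> inevitably (\<lambda>r. cur_route d r u = v)"

lemma converges_unique: "converges u v \<Longrightarrow> converges u w \<Longrightarrow> v = w"
  unfolding converges_def using inevitably_conj inevitably_witness by fastforce

lemma converges_dest: "converges d (Some [d])"
  unfolding converges_def cur_route_def by (rule inevitablyI) simp

definition offer :: "'v set \<Rightarrow> ('v \<Rightarrow> 'v list option) \<Rightarrow> 'v \<Rightarrow> 'v \<Rightarrow> 'v list option" where
  "offer U r n u = (case cur_route d r n of
     None \<Rightarrow> None
   | Some p \<Rightarrow> if exports cp d n p u \<and> secure_route U p then Some p else None)"

lemma available_within:
  assumes "wellformed r" "u \<in> U"
  shows "{q \<in> avail r u. secure_route U q \<and> N (q ! 1)}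
       = {u # p | n p. adj cp pr u n \<and> N n \<and> offer U r n u = Some p \<and> u \<notin> set p}"
proof (intro equalityI subsetI)
  fix q assume "q \<in> {q \<in> avail r u. secure_route U q \<and> N (q ! 1)}"
  then have q: "q \<in> avail r u" "secure_route U q" "N (q ! 1)" by auto
  from assms(1) q(1) obtain n p where "q = u # p" "adj cp pr u n" "cur_route d r n = Some p"
    "exports cp d n p u" "u \<notin> set p" "q ! 1 = n"
    by (rule availableE)
  with q show "q \<in> {u # p | n p. adj cp pr u n \<and> N n \<and> offer U r n u = Some p \<and> u \<notin> set p}"
    by (auto simp: offer_def secure_route_def)
next
  fix q assume "q \<in> {u # p | n p. adj cp pr u n \<and> N n \<and> offer U r n u = Some p \<and> u \<notin> set p}"
  then obtain n p where q: "q = u # p" "adj cp pr u n" "N n" "offer U r n u = Some p" "u \<notin> set p"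
    by blast
  then have p: "cur_route d r n = Some p" "exports cp d n p u" "secure_route U p"
    by (auto simp: offer_def split: option.splits if_splits)
  then have "q \<in> avail r u"
    using q unfolding available_def by blast
  moreover obtain z where "p = n # z"
    using cur_route_Cons[OF assms(1) p(1)] by blast
  ultimately show "q \<in> {q \<in> avail r u. secure_route U q \<and> N (q ! 1)}"
    using q p assms(2) by (auto simp: secure_route_def)
qed

definition avoids :: "('v list \<Rightarrow> bool) \<Rightarrow> 'v \<Rightarrow> bool" where
  "avoids P u \<longleftrightarrow>
     inevitably (\<lambda>r. (\<forall>q\<in>avail r u. \<not> P q) \<and> (\<forall>p. cur_route d r u = Some p \<longrightarrow> \<not> P p))"

lemma converges_or_avoids:
  assumes u: "u \<in> U" "u \<in> V" "u \<noteq> d"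
    and offers: "\<And>n. adj cp pr u n \<Longrightarrow> N n \<Longrightarrow> \<exists>e. inevitably (\<lambda>r. offer U r n u = e)"
    and prefers: "inevitably (\<lambda>r. prefers (\<lambda>q. secure_route U q \<and> N (q ! 1)) r u)"
  shows "(\<exists>p. secure_route U p \<and> N (p ! 1) \<and> converges u (Some p))
    \<or> avoids (\<lambda>q. secure_route U q \<and> N (q ! 1)) u"
proof -
  let ?P = "\<lambda>q. secure_route U q \<and> N (q ! 1)"
  let ?nb = "{n. adj cp pr u n \<and> N n}"
  have "\<forall>n\<in>?nb. \<exists>e. inevitably (\<lambda>r. offer U r n u = e)"
    using offers by blast
  from inevitably_constant_on[OF finite_neighbours this]
  obtain e where e: "inevitably (\<lambda>r. \<forall>n\<in>?nb. offer U r n u = e n)" ..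
  define B where "B = {u # p | n p. adj cp pr u n \<and> N n \<and> e n = Some p \<and> u \<notin> set p}"
  have candidates: "inevitably (\<lambda>r. {q \<in> avail r u. ?P q} = B)"
  proof (rule inevitably_mono[OF e])
    fix r assume r: "wellformed r" "\<forall>n\<in>?nb. offer U r n u = e n"
    then have "\<And>n. adj cp pr u n \<Longrightarrow> N n \<Longrightarrow> offer U r n u = e n"
      by blast
    then show "{q \<in> avail r u. ?P q} = B"
      unfolding available_within[OF r(1) u(1)] B_def by (simp cong: conj_cong)
  qed
  show ?thesis
  proof (cases "B = {}")
    case False
    define b where "b = best (prefer u) B"
    have selected: "inevitably (\<lambda>r. sel r u = Some b \<and> ?P b)"
    proof (rule inevitably_mono[OF inevitably_conj[OF candidates prefers]])
      fix r assume "wellformed r" "{q \<in> avail r u. ?P q} = B \<and> prefers ?P r u"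
      then show "sel r u = Some b \<and> ?P b"
        unfolding b_def using select_preferred False by blast
    qed
    then have "?P b"
      using inevitably_witness by blast
    have "inevitably (\<lambda>r. sel r u = Some b)"
      by (rule inevitably_mono[OF selected]) simp
    then have "inevitably (\<lambda>r. r u = Some b)"
      by (rule inevitably_select[OF u(2,3), of "\<lambda>v. v = Some b"])
    then have "converges u (Some b)"
      unfolding converges_def cur_route_def using u(3) by simp
    with \<open>?P b\<close> show ?thesis by blast
  next
    case True
    have none: "inevitably (\<lambda>r. \<forall>q\<in>avail r u. \<not> ?P q)"
      by (rule inevitably_mono[OF candidates]) (use True in blast)
    then have "inevitably (\<lambda>r. \<forall>p. sel r u = Some p \<longrightarrow> \<not> ?P p)"
      by (rule inevitably_mono) (use select_in_available in blast)
    then have "inevitably (\<lambda>r. \<forall>p. r u = Some p \<longrightarrow> \<not> ?P p)"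
      by (rule inevitably_select[OF u(2,3)])
    with none have "avoids ?P u"
      unfolding avoids_def cur_route_def using u(3) by (simp add: inevitably_conj)
    then show ?thesis by blast
  qed
qed

definition customer_route :: "'v \<Rightarrow> 'v list \<Rightarrow> bool" where
  "customer_route u p \<longleftrightarrow> u = d \<or> cp (p ! 1) u"

definition customer_settled :: "'v set \<Rightarrow> 'v \<Rightarrow> bool" where
  "customer_settled U c \<longleftrightarrow>
     (\<exists>p. secure_route U p \<and> customer_route c p \<and> converges c (Some p))
   \<or> inevitably (\<lambda>r. \<forall>p. cur_route d r c = Some p \<longrightarrow> \<not> (secure_route U p \<and> customer_route c p))"

lemma converges_customer_settled:
  assumes "converges c v"
  shows "customer_settled U c"
proof (cases "\<exists>p. v = Some p \<and> secure_route U p \<and> customer_route c p")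
  case True
  with assms show ?thesis
    unfolding customer_settled_def by blast
next
  case False
  have "inevitably (\<lambda>r. \<forall>p. cur_route d r c = Some p \<longrightarrow> \<not> (secure_route U p \<and> customer_route c p))"
    using assms unfolding converges_def by (rule inevitably_mono) (use False in blast)
  then show ?thesis
    unfolding customer_settled_def by blast
qed

lemma offer_of_customer_settled:
  assumes "customer_settled U c" "\<not> cp u c"
  shows "\<exists>e. inevitably (\<lambda>r. offer U r c u = e)"
proof -
  have exports: "exports cp d c p u \<longleftrightarrow> customer_route c p" for p
    using assms(2) unfolding exports_def customer_route_def by blast
  from assms(1) show ?thesis
    unfolding customer_settled_def
  proof (elim disjE exE conjE)
    fix p assume "secure_route U p" "customer_route c p" "converges c (Some p)"
    then have "inevitably (\<lambda>r. offer U r c u = Some p)"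
      unfolding converges_def by (elim inevitably_mono) (simp add: offer_def exports)
    then show ?thesis ..
  next
    assume "inevitably (\<lambda>r. \<forall>p. cur_route d r c = Some p \<longrightarrow> \<not> (secure_route U p \<and> customer_route c p))"
    then have "inevitably (\<lambda>r. offer U r c u = None)"
      by (rule inevitably_mono) (auto simp: offer_def exports split: option.splits)
    then show ?thesis ..
  qed
qed

lemma not_secure_if_notin:
  assumes "wellformed r" "u \<notin> U"
  shows "\<forall>q\<in>avail r u. \<not> secure_route U q" "cur_route d r u = Some p \<Longrightarrow> \<not> secure_route U p"
  using assms cur_route_Cons[OF assms(1), of u p]
  by (auto simp: secure_route_def elim!: availableE)

text \<open>Customers export their customer routes to providers, so customer routes settle from the
  bottom of the customer-provider hierarchy upwards.\<close>
lemma customer_settled_all: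
  assumes prefers_customer: "\<And>u. u \<in> V \<Longrightarrow> u \<noteq> d \<Longrightarrow> u \<in> U \<Longrightarrow>
      (\<exists>v. converges u v) \<or> inevitably (\<lambda>r. prefers (\<lambda>q. secure_route U q \<and> cp (q ! 1) u) r u)"
    and "c \<in> V"
  shows "customer_settled U c"
  using assms(2)
proof (induction c rule: wf_induct_rule[OF wf_cp])
  case (1 c)
  consider "c = d" | "c \<noteq> d" "c \<notin> U" | "c \<noteq> d" "c \<in> U" "\<exists>v. converges c v"
    | "c \<noteq> d" "c \<in> U" "inevitably (\<lambda>r. prefers (\<lambda>q. secure_route U q \<and> cp (q ! 1) c) r c)"
    using prefers_customer 1(2) by blast
  then show ?case
  proof cases
    case 1
    then show ?thesis
      using converges_dest converges_customer_settled by blast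
  next
    case 2
    then have "inevitably (\<lambda>r. \<forall>p. cur_route d r c = Some p \<longrightarrow> \<not> (secure_route U p \<and> customer_route c p))"
      using not_secure_if_notin by (blast intro: inevitablyI)
    then show ?thesis
      unfolding customer_settled_def by blast
  next
    case 3
    then show ?thesis
      using converges_customer_settled by blast
  next
    case 4
    have offers: "\<exists>e. inevitably (\<lambda>r. offer U r n c = e)" if "adj cp pr c n" "cp n c" for n
      using 1(1) that(2) cp_in_V cp_asym by (blast intro: offer_of_customer_settled)
    have "(\<exists>p. secure_route U p \<and> cp (p ! 1) c \<and> converges c (Some p))
        \<or> avoids (\<lambda>q. secure_route U q \<and> cp (q ! 1) c) c"
      by (rule converges_or_avoids[where N = "\<lambda>n. cp n c"]) (use 1(2) 4 offers in blast)+
    then show ?thesis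
    proof (elim disjE exE conjE)
      fix p assume "secure_route U p" "cp (p ! 1) c" "converges c (Some p)"
      then show ?thesis
        unfolding customer_settled_def customer_route_def by blast
    next
      assume "avoids (\<lambda>q. secure_route U q \<and> cp (q ! 1) c) c"
      then have "inevitably (\<lambda>r. \<forall>p. cur_route d r c = Some p \<longrightarrow>
          \<not> (secure_route U p \<and> customer_route c p))"
        unfolding avoids_def customer_route_def by (rule inevitably_mono) (simp add: 4(1))
      then show ?thesis
        unfolding customer_settled_def by blast
    qed
  qed
qed

definition settled :: "'v set \<Rightarrow> 'v \<Rightarrow> bool" where
  "settled U u \<longleftrightarrow> (\<exists>v. converges u v) \<or> avoids (secure_route U) u"

lemma offer_of_settled:
  assumes "settled U n"
  shows "\<exists>e. inevitably (\<lambda>r. offer U r n u = e)"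
  using assms unfolding settled_def
proof (elim disjE exE)
  fix v assume "converges n v"
  then have "inevitably (\<lambda>r. offer U r n u = (case v of None \<Rightarrow> None
      | Some p \<Rightarrow> if exports cp d n p u \<and> secure_route U p then Some p else None))"
    unfolding converges_def by (rule inevitably_mono) (simp add: offer_def)
  then show ?thesis ..
next
  assume "avoids (secure_route U) n"
  then have "inevitably (\<lambda>r. offer U r n u = None)"
    unfolding avoids_def by (rule inevitably_mono) (auto simp: offer_def split: option.splits)
  then show ?thesis ..
qed

text \<open>A non-provider neighbour only exports customer routes, which have settled; routes from
  providers settle from the top of the hierarchy downwards.\<close>
lemma settled_all:
  assumes customer_settled: "\<And>c. c \<in> V \<Longrightarrow> customer_settled U c"
    and prefers_secure: "\<And>u. u \<in> V \<Longrightarrow> u \<noteq> d \<Longrightarrow> u \<in> U \<Longrightarrow>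
      inevitably (\<lambda>r. prefers (secure_route U) r u)"
    and "u \<in> V"
  shows "settled U u"
  using assms(3)
proof (induction u rule: wf_induct_rule[OF wf_cp_converse])
  case (1 u)
  consider "u = d" | "u \<noteq> d" "u \<notin> U" | "u \<noteq> d" "u \<in> U"
    by blast
  then show ?case
  proof cases
    case 1
    then show ?thesis
      using converges_dest unfolding settled_def by blast
  next
    case 2
    then have "avoids (secure_route U) u"
      unfolding avoids_def using not_secure_if_notin by (blast intro: inevitablyI)
    then show ?thesis
      unfolding settled_def by blast
  next
    case 3
    have offers: "\<exists>e. inevitably (\<lambda>r. offer U r n u = e)" if "adj cp pr u n" for n
    proof (cases "cp u n")
      case True
      with 1(1) that show ?thesis
        using adj_in_V by (blast intro: offer_of_settled)
    next
      case False
      with that show ?thesis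
        using adj_in_V customer_settled by (blast intro: offer_of_customer_settled)
    qed
    have "inevitably (\<lambda>r. prefers (\<lambda>q. secure_route U q \<and> True) r u)"
      using prefers_secure 1(2) 3 by simp
    then have "(\<exists>p. secure_route U p \<and> True \<and> converges u (Some p))
        \<or> avoids (\<lambda>q. secure_route U q \<and> True) u"
      by (intro converges_or_avoids) (use 1(2) 3 offers in blast)+
    then have "(\<exists>p. converges u (Some p)) \<or> avoids (secure_route U) u"
      by auto
    then show ?thesis
      unfolding settled_def by blast
  qed
qed

lemma prefers_secure_customer_routes:
  assumes "u \<in> S" "m = SecFirst"
  shows "prefers (\<lambda>q. secure_route S q \<and> cp (q ! 1) u) r u"
  unfolding prefers_def better_def
  using assms by (auto simp: rank_key_def Let_def lp_class_def lex_less_Cons)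

lemma prefers_secure_routes:
  assumes "u \<in> S" "m = SecFirst"
  shows "prefers (secure_route S) r u"
  unfolding prefers_def better_def
  using assms by (auto simp: rank_key_def Let_def lex_less_Cons)

lemma prefers_customer_routes:
  assumes "u \<notin> S \<or> m \<noteq> SecFirst \<or> (\<forall>q\<in>avail r u. \<not> secure_route S q)"
  shows "prefers (\<lambda>q. secure_route UNIV q \<and> cp (q ! 1) u) r u"
  unfolding prefers_def better_def
  using assms by (cases m) (auto simp: rank_key_def Let_def lp_class_def lex_less_Cons secure_route_def)

lemma settled_secure_first:
  assumes "m = SecFirst" "u \<in> V"
  shows "settled S u"
proof -
  have "customer_settled S c" if "c \<in> V" for c
  proof (rule customer_settled_all[OF _ that])
    show "(\<exists>v. converges u v) \<or> inevitably (\<lambda>r. prefers (\<lambda>q. secure_route S q \<and> cp (q ! 1) u) r u)"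
      if "u \<in> S" for u
      by (intro disjI2 inevitablyI prefers_secure_customer_routes that assms(1))
  qed
  then show ?thesis
  proof (rule settled_all[OF _ _ assms(2)])
    show "inevitably (\<lambda>r. prefers (secure_route S) r u)" if "u \<in> S" for u
      by (intro inevitablyI prefers_secure_routes that assms(1))
  qed
qed

lemma converges_ex:
  assumes "u \<in> V"
  shows "\<exists>v. converges u v"
proof -
  have "customer_settled UNIV c" if "c \<in> V" for c
  proof (rule customer_settled_all[OF _ that])
    fix u assume u: "u \<in> V" "u \<noteq> d"
    show "(\<exists>v. converges u v)
      \<or> inevitably (\<lambda>r. prefers (\<lambda>q. secure_route UNIV q \<and> cp (q ! 1) u) r u)"
    proof (cases "u \<in> S \<and> m = SecFirst")
      case True
      with u have "settled S u"
        using settled_secure_first by blast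
      then show ?thesis
        unfolding settled_def avoids_def
      proof (elim disjE)
        assume "inevitably (\<lambda>r. (\<forall>q\<in>avail r u. \<not> secure_route S q)
            \<and> (\<forall>p. cur_route d r u = Some p \<longrightarrow> \<not> secure_route S p))"
        then have "inevitably (\<lambda>r. prefers (\<lambda>q. secure_route UNIV q \<and> cp (q ! 1) u) r u)"
          by (rule inevitably_mono) (rule prefers_customer_routes, blast)
        then show ?thesis ..
      qed simp
    next
      case False
      have "inevitably (\<lambda>r. prefers (\<lambda>q. secure_route UNIV q \<and> cp (q ! 1) u) r u)"
        by (rule inevitablyI, rule prefers_customer_routes) (use False in blast)
      then show ?thesis ..
    qed
  qed
  then have "settled UNIV u"
    by (rule settled_all) (auto intro: inevitablyI simp: prefers_def secure_route_def assms)
  then show ?thesis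
    unfolding settled_def avoids_def converges_def
    by (auto elim!: inevitably_mono simp: secure_route_def intro: exI[of _ None])
qed

definition limit_state :: "'v \<Rightarrow> 'v list option" where
  "limit_state u = (if u \<in> V \<and> u \<noteq> d then THE v. converges u v else None)"

lemma inevitably_limit_state: "inevitably (\<lambda>r. r = limit_state)"
proof -
  have "\<forall>u\<in>V. inevitably (\<lambda>r. cur_route d r u = (THE v. converges u v))"
  proof
    fix u assume "u \<in> V"
    then have "converges u (THE v. converges u v)"
      using converges_ex converges_unique by (metis theI)
    then show "inevitably (\<lambda>r. cur_route d r u = (THE v. converges u v))"
      unfolding converges_def .
  qed
  then have "inevitably (\<lambda>r. \<forall>u\<in>V. cur_route d r u = (THE v. converges u v))"
    by (rule inevitably_ball[OF finite_V])
  then show ?thesis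
  proof (rule inevitably_mono)
    fix r assume r: "wellformed r" "\<forall>u\<in>V. cur_route d r u = (THE v. converges u v)"
    show "r = limit_state"
    proof
      fix u
      show "r u = limit_state u"
      proof (cases "u \<in> V \<and> u \<noteq> d")
        case True
        with r(2) show ?thesis
          unfolding limit_state_def cur_route_def by auto
      next
        case False
        with r(1) have "r u = None"
          unfolding wellformed_def by (cases "r u") auto
        with False show ?thesis
          unfolding limit_state_def by auto
      qed
    qed
  qed
qed

lemma trace_limit_state:
  assumes "admissible r0 \<sigma>"
  shows "\<exists>T. \<forall>t\<ge>T. trace r0 \<sigma> t = limit_state"
  using inevitably_limit_state assms unfolding inevitably_def eventually_sequentially by blast

lemma stable_limit_state: "stable_state V cp pr d S m tb limit_state"
proof -
  obtain T where T: "\<And>t. t \<ge> T \<Longrightarrow> trace (\<lambda>_. None) (\<lambda>_. UNIV) t = limit_state"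
    using trace_limit_state[OF admissible_synchronous] by blast
  have "limit_state s = select cp pr d S m tb limit_state s" if "s \<in> V" "s \<noteq> d" for s
    using T[of T] T[of "Suc T"] that by (metis le_Suc_eq order_refl run.simps(2) UNIV_I)
  then show ?thesis
    unfolding stable_state_def limit_state_def by auto
qed

end

theorem theorem1:
  fixes V :: "'v set" and cp pr :: "'v \<Rightarrow> 'v \<Rightarrow> bool" and d :: 'v and S :: "'v set"
    and m :: sec_model and tb :: "'v \<Rightarrow> 'v list \<Rightarrow> 'v list \<Rightarrow> bool"
  assumes "as_graph V cp pr" and "d \<in> V" and "S \<subseteq> V"
    and "\<forall>s. strict_total (tb s)"
  shows "\<exists>!r. stable_state V cp pr d S m tb r
           \<and> (\<forall>r0 \<sigma>. routing_state V cp pr d r0 \<and> fair V d \<sigma> \<longrightarrow>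
                 (\<exists>T. \<forall>t\<ge>T. run V cp pr d S m tb r0 \<sigma> t = r))"
proof -
  interpret sbgp V cp pr d S m tb
    using assms by unfold_locales auto
  show ?thesis
  proof (rule ex1I[of _ limit_state], intro conjI allI impI)
    show "stable_state V cp pr d S m tb limit_state"
      by (rule stable_limit_state)
    show "\<exists>T. \<forall>t\<ge>T. trace r0 \<sigma> t = limit_state"
      if "routing_state V cp pr d r0 \<and> fair V d \<sigma>" for r0 \<sigma>
      using that by (intro trace_limit_state) (simp add: admissible_def)
  next
    fix r assume "stable_state V cp pr d S m tb r
      \<and> (\<forall>r0 \<sigma>. routing_state V cp pr d r0 \<and> fair V d \<sigma> \<longrightarrow> (\<exists>T. \<forall>t\<ge>T. trace r0 \<sigma> t = r))"
    then have "inevitably (\<lambda>r'. r' = r)"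
      unfolding inevitably_def admissible_def eventually_sequentially by blast
    with inevitably_limit_state show "r = limit_state"
      using inevitably_conj inevitably_witness by fastforce
  qed
qed

end
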